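(* Let $\mathbf{X}$ be an $\mathbf{I}$-separated structure with universe $X$ and let $\{L,U\}$ be a partition of $X$. Then the characteristic function of $U$ is a homomorphism from $\mathbf{X}$ into $\mathbf{I}$ if and only if for every finite $s\subseteq U$ and every finite $t\subseteq L$ we have $s\not\sqsubseteq t$.
   Context: $\mathbf{I}$ is the structure with universe $\{0,1\}$ and, for all $n,m\in\mathbb N$ (including $0$), an $(n+m)$-ary relation $I_{n,m}$ given by $I_{n,m}(a_0,\dots,a_{n-1},b_0,\dots,b_{m-1})\iff \min_{i<n}a_i\le\max_{j<m}b_j$, with $\min\emptyset=1$, $\max\emptyset=0$. A structure is $\mathbf{I}$-separated if it embeds into some power of $\mathbf{I}$. For a structure in the language $\{I_{n,m}\}$ and finite subsets $a=\{s_0,\dots,s_{n-1}\}$, $b=\{t_0,\dots,t_{m-1}\}$ of its universe, $a\sqsubseteq b$ means $I_{n,m}(s_0,\dots,s_{n-1},t_0,\dots,t_{m-1})$. A homomorphism into $\mathbf{I}$ is a map preserving all $I_{n,m}$. *)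

theory Defs
  imports Main
begin

text \<open>A structure in the language of the relation symbols I_{n,m} (n, m natural numbers)
is a universe X together with an interpretation rel, where I_{n,m}(a_0..a_{n-1},b_0..b_{m-1})
holds iff rel [a_0,..,a_{n-1}] [b_0,..,b_{m-1}] (n and m are the lengths of the two lists).
Only lists with entries in X are relevant.\<close>

definition I_rel :: "nat list \<Rightarrow> nat list \<Rightarrow> bool" where
  "I_rel as bs \<longleftrightarrow>
     (if as = [] then 1 else Min (set as)) \<le> (if bs = [] then 0 else Max (set bs))"

definition I_univ :: "nat set" where
  "I_univ = {0, 1}"

definition hom_into_I :: "'a set \<Rightarrow> ('a list \<Rightarrow> 'a list \<Rightarrow> bool) \<Rightarrow> ('a \<Rightarrow> nat) \<Rightarrow> bool" where
  "hom_into_I X rel h \<longleftrightarrow>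
     (\<forall>x\<in>X. h x \<in> I_univ) \<and>
     (\<forall>as bs. set as \<subseteq> X \<longrightarrow> set bs \<subseteq> X \<longrightarrow> rel as bs \<longrightarrow> I_rel (map h as) (map h bs))"

text \<open>Embedding of (X, rel) into the power I^K (K an index set): elements of I^K are maps
K \<rightarrow> {0,1}, relations are interpreted coordinatewise.\<close>
definition embeds_into_I_power ::
  "'a set \<Rightarrow> ('a list \<Rightarrow> 'a list \<Rightarrow> bool) \<Rightarrow> 'k set \<Rightarrow> ('a \<Rightarrow> 'k \<Rightarrow> nat) \<Rightarrow> bool" where
  "embeds_into_I_power X rel K f \<longleftrightarrow>
     (\<forall>x\<in>X. \<forall>k\<in>K. f x k \<in> I_univ) \<and>
     (\<forall>x\<in>X. \<forall>y\<in>X. (\<forall>k\<in>K. f x k = f y k) \<longrightarrow> x = y) \<and>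
     (\<forall>as bs. set as \<subseteq> X \<longrightarrow> set bs \<subseteq> X \<longrightarrow>
        (rel as bs \<longleftrightarrow> (\<forall>k\<in>K. I_rel (map (\<lambda>x. f x k) as) (map (\<lambda>x. f x k) bs))))"

text \<open>I-separated: embeds into some power of I.  The index set ranges over sets of an
arbitrary type 'k; since the theorem is universally quantified over 'k, this is faithful.\<close>
definition I_separated :: "'k itself \<Rightarrow> 'a set \<Rightarrow> ('a list \<Rightarrow> 'a list \<Rightarrow> bool) \<Rightarrow> bool" where
  "I_separated _ X rel \<longleftrightarrow> (\<exists>(K::'k set) f. embeds_into_I_power X rel K f)"

definition sqle :: "('a list \<Rightarrow> 'a list \<Rightarrow> bool) \<Rightarrow> 'a set \<Rightarrow> 'a set \<Rightarrow> bool" where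
  "sqle rel s t \<longleftrightarrow>
     (\<exists>as bs. distinct as \<and> set as = s \<and> distinct bs \<and> set bs = t \<and> rel as bs)"

end

theory Submission
  imports Defs
begin

text \<open>Under the indicator of U, a tuple of I_{n,m} can fail in I only when
all its a-entries lie in U and all its b-entries lie in L, so the indicator is a homomorphism
iff no such tuple holds in X.  In an I-separated structure the relations depend only on the
sets of entries (as they do in I and hence in every power of I), so such tuples correspond
exactly to pairs s \<sqsubseteq> t with s \<subseteq> U and t \<subseteq> L finite.\<close>

lemma I_rel_set_cong:
  assumes "set as' = set as" "set bs' = set bs"
  shows "I_rel as' bs' \<longleftrightarrow> I_rel as bs"
  using assms unfolding I_rel_def by (simp flip: set_empty)

lemma embeds_into_I_power_rel_set_cong:
  assumes emb: "embeds_into_I_power X rel K f"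
    and "set as \<subseteq> X" "set bs \<subseteq> X" "set as' = set as" "set bs' = set bs"
  shows "rel as' bs' \<longleftrightarrow> rel as bs"
proof -
  have "I_rel (map (\<lambda>x. f x k) as') (map (\<lambda>x. f x k) bs') \<longleftrightarrow>
        I_rel (map (\<lambda>x. f x k) as) (map (\<lambda>x. f x k) bs)" for k
    using assms by (intro I_rel_set_cong) simp_all
  then show ?thesis
    using emb assms(2-5) unfolding embeds_into_I_power_def by simp
qed

lemma sqle_set_iff:
  assumes sep: "I_separated TYPE('k) X rel" and "set as \<subseteq> X" "set bs \<subseteq> X"
  shows "sqle rel (set as) (set bs) \<longleftrightarrow> rel as bs"
proof -
  obtain K :: "'k set" and f where emb: "embeds_into_I_power X rel K f"
    using sep unfolding I_separated_def by blast
  have "rel as' bs' \<longleftrightarrow> rel as bs" if "set as' = set as" "set bs' = set bs" for as' bs'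
    using embeds_into_I_power_rel_set_cong[OF emb assms(2,3) that] .
  then show ?thesis
    unfolding sqle_def by (metis distinct_remdups set_remdups)
qed

lemma I_rel_indicator_iff:
  "I_rel (map (\<lambda>x. if x \<in> U then 1 else 0) as) (map (\<lambda>x. if x \<in> U then 1 else 0) bs) \<longleftrightarrow>
   \<not> (set as \<subseteq> U \<and> set bs \<inter> U = {})"
  (is "I_rel (map ?h as) (map ?h bs) \<longleftrightarrow> _")
proof
  assume "I_rel (map ?h as) (map ?h bs)"
  moreover have "\<not> I_rel (map ?h as) (map ?h bs)" if "set as \<subseteq> U" "set bs \<inter> U = {}"
  proof -
    have "map ?h as = map (\<lambda>_. 1) as" "map ?h bs = map (\<lambda>_. 0) bs"
      using that by (auto intro: map_cong)
    then show ?thesis unfolding I_rel_def by (simp add: image_constant_conv)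
  qed
  ultimately show "\<not> (set as \<subseteq> U \<and> set bs \<inter> U = {})" by blast
next
  assume "\<not> (set as \<subseteq> U \<and> set bs \<inter> U = {})"
  then consider a where "a \<in> set as" "a \<notin> U" | b where "b \<in> set bs" "b \<in> U" by blast
  then show "I_rel (map ?h as) (map ?h bs)"
  proof cases
    case 1
    then have "Min (set (map ?h as)) = 0" by (intro Min_eqI) force+
    with 1 show ?thesis unfolding I_rel_def by auto
  next
    case 2
    then have "Max (set (map ?h bs)) = 1" by (intro Max_eqI) force+
    moreover have "Min (set (map ?h as)) \<le> 1" if "as \<noteq> []"
      using that by (cases as) (auto intro: order.trans[OF Min_le])
    ultimately show ?thesis using 2 unfolding I_rel_def by auto
  qed
qed

theorem mainTheorem6:
  fixes X L U :: "'a set" and rel :: "'a list \<Rightarrow> 'a list \<Rightarrow> bool"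
  assumes sep: "I_separated TYPE('k) X rel"
    and part: "L \<union> U = X" "L \<inter> U = {}"
  shows "hom_into_I X rel (\<lambda>x. if x \<in> U then 1 else 0) \<longleftrightarrow>
         (\<forall>s t. finite s \<longrightarrow> s \<subseteq> U \<longrightarrow> finite t \<longrightarrow> t \<subseteq> L \<longrightarrow> \<not> sqle rel s t)"
proof -
  have in_UL_iff: "set as \<subseteq> X \<and> set bs \<subseteq> X \<and> set as \<subseteq> U \<and> set bs \<inter> U = {} \<longleftrightarrow>
      set as \<subseteq> U \<and> set bs \<subseteq> L" for as bs :: "'a list"
    using part by blast
  have sqle_iff: "sqle rel (set as) (set bs) \<longleftrightarrow> rel as bs"
    if "set as \<subseteq> U \<and> set bs \<subseteq> L" for as bs
    using that part by (intro sqle_set_iff[OF sep]) auto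
  have "hom_into_I X rel (\<lambda>x. if x \<in> U then 1 else 0) \<longleftrightarrow>
        (\<forall>as bs. set as \<subseteq> U \<and> set bs \<subseteq> L \<longrightarrow> \<not> rel as bs)"
    unfolding hom_into_I_def I_univ_def I_rel_indicator_iff in_UL_iff[symmetric] by (simp; blast)
  also have "\<dots> \<longleftrightarrow> (\<forall>as bs. set as \<subseteq> U \<and> set bs \<subseteq> L \<longrightarrow> \<not> sqle rel (set as) (set bs))"
    using sqle_iff by blast
  also have "\<dots> \<longleftrightarrow>
        (\<forall>s t. finite s \<longrightarrow> s \<subseteq> U \<longrightarrow> finite t \<longrightarrow> t \<subseteq> L \<longrightarrow> \<not> sqle rel s t)"
    by (metis finite_list finite_set)
  finally show ?thesis .
qed

end
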